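(* Let $v\ge 4$ and $\theta\in[0,1]$, and consider the tipsy cop and drunken robber game on the cycle graph $C_v$. For $1\le i\le\lfloor v/2\rfloor$ and $m\ge 1$ the following hold. If $v$ is even: \[ R_m^i=\begin{cases}\tfrac12 C^{2}_{m-1}, & i=1,\\ \tfrac12 C^{i-1}_{m-1}+\tfrac12 C^{i+1}_{m-1}, & 1<i<v/2,\\ C^{v/2-1}_{m-1}, & i=v/2,\end{cases} \qquad C_m^i=\begin{cases}\tfrac{\theta}{2}R^{2}_{m-1}, & i=1,\\ \left(1-\tfrac{\theta}{2}\right)R^{i-1}_{m-1}+\tfrac{\theta}{2}R^{i+1}_{m-1}, & 1<i<v/2,\\ R^{v/2-1}_{m-1}, & i=v/2.\end{cases} \] If $v$ is odd: \[ R_m^i=\begin{cases}\tfrac12 C^{2}_{m-1}, & i=1,\\ \tfrac12 C^{i-1}_{m-1}+\tfrac12 C^{i+1}_{m-1}, & 1<i<\frac{v-1}{2},\\ \tfrac12 C^{(v-3)/2}_{m-1}+\tfrac12 C^{(v-1)/2}_{m-1}, & i=\frac{v-1}{2},\end{cases} \qquad C_m^i=\begin{cases}\tfrac{\theta}{2}R^{2}_{m-1}, & i=1,\\ \left(1-\tfrac{\theta}{2}\right)R^{i-1}_{m-1}+\tfrac{\theta}{2}R^{i+1}_{m-1}, & 1<i<\frac{v-1}{2},\\ \left(1-\tfrac{\theta}{2}\right)R^{(v-3)/2}_{m-1}+\tfrac{\theta}{2}R^{(v-1)/2}_{m-1}, & i=\frac{v-1}{2}.\end{cases} \]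
   Context: Tipsy cop and drunken robber game on a graph: a cop and a robber occupy distinct vertices and alternate moves; on each move the mover must move to an adjacent vertex (no staying put). The robber always moves to a uniformly random neighbor. The cop, independently at each of her moves, with probability $\theta$ moves to a uniformly random neighbor and with probability $1-\theta$ moves to a neighbor that decreases her distance to the robber (onto the robber if adjacent). All random choices are independent; the robber is captured (game over) as soon as both occupy the same vertex. On the cycle $C_v$, for $1\le i\le \lfloor v/2\rfloor$, $R^i_m$ denotes the probability that, starting with cop and robber at distance $i$ and the robber to move first (then alternating), no capture occurs during the first $m$ moves; $C^i_m$ is the same probability when the cop moves first. By convention $R^i_0=C^i_0=1$. *)

theory Defs
  imports Complex_Main
begin

definition cyc_nbrs :: "nat \<Rightarrow> nat \<Rightarrow> nat set" where
  "cyc_nbrs v x = {(x + 1) mod v, (x + v - 1) mod v}"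

definition cyc_dist :: "nat \<Rightarrow> nat \<Rightarrow> nat \<Rightarrow> nat" where
  "cyc_dist v x y = min ((x + v - y) mod v) ((y + v - x) mod v)"

definition unif_avg :: "'a set \<Rightarrow> ('a \<Rightarrow> real) \<Rightarrow> real" where
  "unif_avg S f = (\<Sum>x\<in>S. f x) / real (card S)"

definition greedy_moves :: "nat \<Rightarrow> nat \<Rightarrow> nat \<Rightarrow> nat set" where
  "greedy_moves v c r = {y \<in> cyc_nbrs v c. cyc_dist v y r < cyc_dist v c r}"

text \<open>surv v \<theta> robber_first m c r: probability that no capture occurs during the
  first m moves, starting with the cop at c and the robber at r, the robber moving
  first iff robber_first is True (then alternating). The robber moves to a uniformly
  random neighbour; the cop with probability \<theta> moves to a uniformly random neighbour,
  and with probability 1-\<theta> to a distance-decreasing neighbour (chosen uniformly among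
  those if there are several; by symmetry the choice does not matter).\<close>
fun surv :: "nat \<Rightarrow> real \<Rightarrow> bool \<Rightarrow> nat \<Rightarrow> nat \<Rightarrow> nat \<Rightarrow> real" where
  "surv v \<theta> b 0 c r = 1"
| "surv v \<theta> True (Suc m) c r =
     unif_avg (cyc_nbrs v r) (\<lambda>r'. if r' = c then 0 else surv v \<theta> False m c r')"
| "surv v \<theta> False (Suc m) c r =
     \<theta> * unif_avg (cyc_nbrs v c) (\<lambda>c'. if c' = r then 0 else surv v \<theta> True m c' r)
   + (1 - \<theta>) * unif_avg (greedy_moves v c r) (\<lambda>c'. if c' = r then 0 else surv v \<theta> True m c' r)"

definition Rprob :: "nat \<Rightarrow> real \<Rightarrow> nat \<Rightarrow> nat \<Rightarrow> real" where
  "Rprob v \<theta> i m = surv v \<theta> True m 0 i"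

definition Cprob :: "nat \<Rightarrow> real \<Rightarrow> nat \<Rightarrow> nat \<Rightarrow> real" where
  "Cprob v \<theta> i m = surv v \<theta> False m 0 i"

end

theory Submission
  imports Defs
begin

text \<open>Every move changes the cop-robber distance by one, so survival for m moves from
  distance i is an average of survival for m - 1 moves from distances i - 1 and i + 1, with
  capture at distance 0. The rotations and the reflection x \<mapsto> -x of the cycle preserve
  neighbourhoods and distances, hence survival probabilities: rotations move the cop back to
  vertex 0, and the reflection identifies distance v - d with d. The latter folds the
  out-of-range distance back: v/2 + 1 becomes v/2 - 1 for even v, and (v + 1)/2 becomes
  (v - 1)/2 for odd v.\<close>

lemma int_add_sub_mod:
  assumes "y \<le> v"
  shows "int ((x + v - y) mod v) = (int x - int y) mod int v"
proof -
  have "int (x + v - y) = (int x - int y) + int v" using assms by simp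
  then show ?thesis by (simp add: of_nat_mod)
qed

lemma cyc_dist_int:
  assumes "x < v" "y < v"
  shows "int (cyc_dist v x y) = min ((int x - int y) mod int v) ((int y - int x) mod int v)"
  unfolding cyc_dist_def using assms int_add_sub_mod[of y v x] int_add_sub_mod[of x v y] by simp

lemma cyc_dist_eq_0_iff:
  assumes "x < v" "y < v"
  shows "cyc_dist v x y = 0 \<longleftrightarrow> x = y"
proof -
  have v: "0 < int v" using assms by simp
  have small: "a = 0" if "- int v < a" "a < int v" "a mod int v = 0" for a :: int
    using that by (metis mod_neg_neg_trivial mod_pos_pos_trivial nle_le zmod_zminus2_not_zero)
  have "cyc_dist v x y = 0 \<longleftrightarrow> int (cyc_dist v x y) = 0" by simp
  also have "\<dots> \<longleftrightarrow> (int x - int y) mod int v = 0 \<or> (int y - int x) mod int v = 0"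
    using cyc_dist_int[OF assms] pos_mod_sign[OF v, of "int x - int y"]
      pos_mod_sign[OF v, of "int y - int x"]
    by (auto simp: min_def)
  also have "\<dots> \<longleftrightarrow> x = y"
    using assms small[of "int x - int y"] small[of "int y - int x"] by auto
  finally show ?thesis .
qed

lemma cyc_nbrs_subset_lessThan: "0 < v \<Longrightarrow> cyc_nbrs v x \<subseteq> {..<v}"
  unfolding cyc_nbrs_def by auto

lemma cyc_nbrs_int:
  assumes "0 < v"
  shows "cyc_nbrs v x = {nat ((int x + 1) mod int v), nat ((int x - 1) mod int v)}"
proof -
  have "int ((x + v - 1) mod v) = (int x - 1) mod int v"
    using int_add_sub_mod[of 1 v x] assms by simp
  then have "(x + v - 1) mod v = nat ((int x - 1) mod int v)"
    by (metis nat_int)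
  moreover have "(x + 1) mod v = nat ((int x + 1) mod int v)"
    by (metis nat_int of_nat_1 of_nat_add zmod_int)
  ultimately show ?thesis unfolding cyc_nbrs_def by simp
qed

lemma unif_avg_image: "inj_on \<sigma> S \<Longrightarrow> unif_avg (\<sigma> ` S) f = unif_avg S (f \<circ> \<sigma>)"
  unfolding unif_avg_def by (simp add: sum.reindex card_image)

lemma unif_avg_cong: "(\<And>x. x \<in> S \<Longrightarrow> f x = g x) \<Longrightarrow> unif_avg S f = unif_avg S g"
  unfolding unif_avg_def by simp

lemma unif_avg_doubleton: "a \<noteq> b \<Longrightarrow> unif_avg {a, b} f = (f a + f b) / 2"
  unfolding unif_avg_def by simp

lemma unif_avg_singleton: "unif_avg {a} f = f a"
  unfolding unif_avg_def by simp

text \<open>No injectivity hypothesis is needed: distance preservation forces it.\<close>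

lemma surv_automorphism:
  assumes v: "0 < v"
    and range: "\<And>x. x < v \<Longrightarrow> \<sigma> x < v"
    and nbrs: "\<And>x. x < v \<Longrightarrow> cyc_nbrs v (\<sigma> x) = \<sigma> ` cyc_nbrs v x"
    and dist: "\<And>x y. x < v \<Longrightarrow> y < v \<Longrightarrow> cyc_dist v (\<sigma> x) (\<sigma> y) = cyc_dist v x y"
    and "c < v" "r < v"
  shows "surv v \<theta> b m (\<sigma> c) (\<sigma> r) = surv v \<theta> b m c r"
  using \<open>c < v\<close> \<open>r < v\<close>
proof (induction m arbitrary: b c r)
  case 0
  then show ?case by simp
next
  case (Suc m)
  have inj: "inj_on \<sigma> {..<v}"
    by (rule inj_onI) (metis dist cyc_dist_eq_0_iff range lessThan_iff)
  then have inj_eq: "x < v \<Longrightarrow> y < v \<Longrightarrow> \<sigma> x = \<sigma> y \<longleftrightarrow> x = y" for x y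
    by (auto simp: inj_on_def)
  have nbrs_lt: "x \<in> cyc_nbrs v y \<Longrightarrow> x < v" for x y
    using cyc_nbrs_subset_lessThan[OF v] by blast
  have inj_nbrs: "inj_on \<sigma> S" if "S \<subseteq> cyc_nbrs v x" for S x
    using inj that cyc_nbrs_subset_lessThan[OF v] inj_on_subset by blast
  have greedy: "greedy_moves v (\<sigma> c) (\<sigma> r) = \<sigma> ` greedy_moves v c r"
    using Suc.prems nbrs_lt unfolding greedy_moves_def nbrs[OF Suc.prems(1)]
    by (auto simp: dist)
  have greedy_sub: "greedy_moves v c r \<subseteq> cyc_nbrs v c"
    unfolding greedy_moves_def by auto
  have cop_avg: "unif_avg (\<sigma> ` S) (\<lambda>c'. if c' = \<sigma> r then 0 else surv v \<theta> True m c' (\<sigma> r))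
      = unif_avg S (\<lambda>c'. if c' = r then 0 else surv v \<theta> True m c' r)"
    if "S \<subseteq> cyc_nbrs v c" for S
    using that Suc.prems nbrs_lt
    by (auto simp: unif_avg_image inj_nbrs comp_def inj_eq Suc.IH intro!: unif_avg_cong)
  have robber_avg: "unif_avg (\<sigma> ` cyc_nbrs v r) (\<lambda>r'. if r' = \<sigma> c then 0 else surv v \<theta> False m (\<sigma> c) r')
      = unif_avg (cyc_nbrs v r) (\<lambda>r'. if r' = c then 0 else surv v \<theta> False m c r')"
    using Suc.prems nbrs_lt
    by (auto simp: unif_avg_image[OF inj_nbrs[OF subset_refl]] comp_def inj_eq Suc.IH intro!: unif_avg_cong)
  show ?case
    by (cases b) (simp_all add: nbrs Suc.prems greedy cop_avg robber_avg greedy_sub)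
qed

lemma surv_rotate:
  assumes "0 < v" "c < v" "r < v"
  shows "surv v \<theta> b m ((c + k) mod v) ((r + k) mod v) = surv v \<theta> b m c r"
proof (rule surv_automorphism[where \<sigma>="\<lambda>x. (x + k) mod v", OF assms(1) _ _ _ assms(2,3)])
  fix x y assume x: "x < v" and y: "y < v"
  have "((x + 1) mod v + k) mod v = ((x + k) mod v + 1) mod v"
    and "((x + (v - 1)) mod v + k) mod v = ((x + k) mod v + (v - 1)) mod v"
    by (simp_all add: mod_simps add_ac)
  moreover have "x + v - 1 = x + (v - 1)" "(x + k) mod v + v - 1 = (x + k) mod v + (v - 1)"
    using assms by auto
  ultimately show "cyc_nbrs v ((x + k) mod v) = (\<lambda>x. (x + k) mod v) ` cyc_nbrs v x"
    unfolding cyc_nbrs_def by auto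
  have "int ((z + k) mod v) = (int z + int k) mod int v" for z by (simp add: zmod_int)
  then show "cyc_dist v ((x + k) mod v) ((y + k) mod v) = cyc_dist v x y"
    using cyc_dist_int[OF x y] cyc_dist_int[of "(x + k) mod v" v "(y + k) mod v"] assms
    by (simp add: mod_diff_eq)
qed (use assms in simp)

lemma surv_reflect:
  assumes "0 < v" "c < v" "r < v"
  shows "surv v \<theta> b m ((v - c) mod v) ((v - r) mod v) = surv v \<theta> b m c r"
proof (rule surv_automorphism[where \<sigma>="\<lambda>x. (v - x) mod v", OF assms(1) _ _ _ assms(2,3)])
  have neg: "y \<le> v \<Longrightarrow> int ((v - y) mod v) = (- int y) mod int v" for y
    using int_add_sub_mod[of y v 0] by simp
  have neg_nat: "(v - nat (a mod int v)) mod v = nat ((- a) mod int v)" for a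
  proof -
    have "nat (a mod int v) \<le> v" using assms pos_mod_bound[of "int v" a] by linarith
    then have "int ((v - nat (a mod int v)) mod v) = (- a) mod int v"
      using neg assms by (simp add: mod_simps)
    then show ?thesis by (metis nat_int)
  qed
  fix x y assume x: "x < v" and y: "y < v"
  show "cyc_nbrs v ((v - x) mod v) = (\<lambda>x. (v - x) mod v) ` cyc_nbrs v x"
    unfolding cyc_nbrs_int[OF assms(1)] using x by (auto simp: neg neg_nat mod_simps)
  show "cyc_dist v ((v - x) mod v) ((v - y) mod v) = cyc_dist v x y"
    using cyc_dist_int[OF x y] cyc_dist_int[of "(v - x) mod v" v "(v - y) mod v"] assms x y
    by (simp add: neg mod_diff_eq min.commute)
qed (use assms in simp)

lemma Rprob_reflect: "0 < d \<Longrightarrow> d < v \<Longrightarrow> Rprob v \<theta> (v - d) k = Rprob v \<theta> d k"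
  unfolding Rprob_def using surv_reflect[of v 0 d] by simp

lemma Cprob_reflect: "0 < d \<Longrightarrow> d < v \<Longrightarrow> Cprob v \<theta> (v - d) k = Cprob v \<theta> d k"
  unfolding Cprob_def using surv_reflect[of v 0 d] by simp

lemma add_pred_mod_self:
  fixes i v :: nat
  assumes "1 \<le> i" "i \<le> v"
  shows "(i + v - 1) mod v = i - 1"
proof -
  have "i + v - 1 = (i - 1) + v" using assms by linarith
  then show ?thesis using assms by (simp add: mod_if)
qed

lemma cyc_nbrs_0: "2 \<le> v \<Longrightarrow> cyc_nbrs v 0 = {1, v - 1}"
  unfolding cyc_nbrs_def by simp

lemma cyc_nbrs_interior:
  fixes i v :: nat
  assumes "1 \<le> i" "i + 1 < v"
  shows "cyc_nbrs v i = {i + 1, i - 1}"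
  unfolding cyc_nbrs_def using assms add_pred_mod_self[of i v] by simp

lemma surv_shift_left:
  assumes "1 \<le> i" "i < v"
  shows "surv v \<theta> b k 1 i = surv v \<theta> b k 0 (i - 1)"
proof -
  have "(1 + (v - 1)) mod v = 0" "(i + (v - 1)) mod v = i - 1"
    using assms add_pred_mod_self[of i v] by simp_all
  then show ?thesis using surv_rotate[of v 1 i \<theta> b k "v - 1"] assms by simp
qed

lemma surv_shift_right:
  assumes "i + 1 < v"
  shows "surv v \<theta> b k (v - 1) i = surv v \<theta> b k 0 (i + 1)"
  using surv_rotate[of v "v - 1" i \<theta> b k 1] assms by simp

lemma cyc_dist_0: "i \<le> v div 2 \<Longrightarrow> cyc_dist v 0 i = i"
  unfolding cyc_dist_def by (cases "i = 0") auto

lemma cyc_dist_1: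
  fixes i v :: nat
  assumes "1 \<le> i" "i \<le> v div 2"
  shows "cyc_dist v 1 i = i - 1"
proof (cases "i = 1")
  case True
  then show ?thesis unfolding cyc_dist_def using assms by simp
next
  case False
  then have "(1 + v - i) mod v = v + 1 - i" using assms by simp
  then show ?thesis unfolding cyc_dist_def using assms add_pred_mod_self[of i v] by simp
qed

lemma cyc_dist_v_minus_1:
  fixes i v :: nat
  assumes "3 \<le> v" "i \<le> v div 2"
  shows "cyc_dist v (v - 1) i = min (v - 1 - i) (i + 1)"
proof -
  have "i + 1 < v" using assms by presburger
  have "v - 1 + v - i = (v - 1 - i) + v" using assms by simp
  then have "(v - 1 + v - i) mod v = v - 1 - i" using assms by (simp add: mod_if)
  moreover have "(i + v - (v - 1)) mod v = i + 1" using \<open>i + 1 < v\<close> by simp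
  ultimately show ?thesis unfolding cyc_dist_def by simp
qed

lemma greedy_moves_0:
  fixes i v :: nat
  assumes "3 \<le> v" "1 \<le> i" "i \<le> v div 2"
  shows "greedy_moves v 0 i = (if 2 * i = v then {1, v - 1} else {1})"
  unfolding greedy_moves_def using assms cyc_nbrs_0 cyc_dist_0 cyc_dist_1 cyc_dist_v_minus_1
  by auto

context
  fixes v i :: nat
  assumes v: "3 \<le> v" and i: "1 \<le> i" "i \<le> v div 2"
begin

lemma Rprob_Suc:
  "Rprob v \<theta> i (Suc k) = ((if i = 1 then 0 else Cprob v \<theta> (i - 1) k) + Cprob v \<theta> (i + 1) k) / 2"
proof -
  have "cyc_nbrs v i = {i + 1, i - 1}" using v i by (intro cyc_nbrs_interior) presburger+
  then show ?thesis
    unfolding Rprob_def Cprob_def surv.simps using i by (simp add: unif_avg_doubleton add.commute)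
qed

lemma Cprob_Suc:
  "Cprob v \<theta> i (Suc k) =
     \<theta> * ((if i = 1 then 0 else Rprob v \<theta> (i - 1) k) + Rprob v \<theta> (i + 1) k) / 2
     + (1 - \<theta>) * (if 2 * i = v then (Rprob v \<theta> (i - 1) k + Rprob v \<theta> (i + 1) k) / 2
                    else if i = 1 then 0 else Rprob v \<theta> (i - 1) k)"
proof -
  have "i + 1 < v" using v i by presburger
  then have shift: "surv v \<theta> True k 1 i = surv v \<theta> True k 0 (i - 1)"
      "surv v \<theta> True k (v - 1) i = surv v \<theta> True k 0 (i + 1)"
    using i surv_shift_left[of i v \<theta> True k] surv_shift_right[of i v \<theta> True k] by simp_all
  have nbrs: "cyc_nbrs v 0 = {1, v - 1}" using v by (simp add: cyc_nbrs_0)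
  have "1 \<noteq> v - 1" "v - 1 \<noteq> i" using \<open>i + 1 < v\<close> v by simp_all
  then show ?thesis
    unfolding Rprob_def Cprob_def surv.simps nbrs greedy_moves_0[OF v i]
    using v shift by (simp add: unif_avg_doubleton unif_avg_singleton)
qed

end

lemma Rprob_Suc_1:
  assumes "3 \<le> v"
  shows "Rprob v \<theta> 1 (Suc k) = 1/2 * Cprob v \<theta> 2 k"
proof -
  have "1 \<le> v div 2" using assms by simp
  from Rprob_Suc[OF assms order_refl this] show ?thesis
    by (simp add: numeral_2_eq_2)
qed

lemma Cprob_Suc_1:
  assumes "3 \<le> v"
  shows "Cprob v \<theta> 1 (Suc k) = \<theta>/2 * Rprob v \<theta> 2 k"
proof -
  have "1 \<le> v div 2" using assms by simp
  from Cprob_Suc[OF assms order_refl this] assms show ?thesis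
    by (simp add: numeral_2_eq_2)
qed

lemma Rprob_Suc_interior:
  assumes "1 < i" "i < v div 2"
  shows "Rprob v \<theta> i (Suc k) = 1/2 * Cprob v \<theta> (i - 1) k + 1/2 * Cprob v \<theta> (i + 1) k"
proof -
  have "3 \<le> v" using assms by linarith
  with assms have "Rprob v \<theta> i (Suc k) = (Cprob v \<theta> (i - 1) k + Cprob v \<theta> (i + 1) k) / 2"
    using Rprob_Suc[of v i \<theta> k] by simp
  then show ?thesis by (simp add: add_divide_distrib)
qed

lemma Cprob_Suc_interior:
  assumes "1 < i" "i < v div 2"
  shows "Cprob v \<theta> i (Suc k) = (1 - \<theta>/2) * Rprob v \<theta> (i - 1) k + \<theta>/2 * Rprob v \<theta> (i + 1) k"
proof -
  have "3 \<le> v" "2 * i \<noteq> v" using assms by linarith+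
  from Cprob_Suc[OF this(1), of i] assms this(2) show ?thesis by (simp add: field_simps)
qed

context
  fixes v h :: nat
  assumes v: "4 \<le> v" and h: "h = v div 2"
begin

lemma reflect_across_antipode:
  assumes "even v"
  shows "Rprob v \<theta> (h + 1) k = Rprob v \<theta> (h - 1) k" "Cprob v \<theta> (h + 1) k = Cprob v \<theta> (h - 1) k"
proof -
  have "v - (h - 1) = h + 1" "0 < h - 1" "h - 1 < v" using v h assms by auto
  then show "Rprob v \<theta> (h + 1) k = Rprob v \<theta> (h - 1) k" "Cprob v \<theta> (h + 1) k = Cprob v \<theta> (h - 1) k"
    using Rprob_reflect[of "h - 1" v \<theta> k] Cprob_reflect[of "h - 1" v \<theta> k] by simp_all
qed

lemma reflect_across_odd_max:
  assumes "odd v"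
  shows "Rprob v \<theta> (h + 1) k = Rprob v \<theta> h k" "Cprob v \<theta> (h + 1) k = Cprob v \<theta> h k"
proof -
  have "v - h = h + 1" "0 < h" "h < v" using v h assms by presburger+
  then show "Rprob v \<theta> (h + 1) k = Rprob v \<theta> h k" "Cprob v \<theta> (h + 1) k = Cprob v \<theta> h k"
    using Rprob_reflect[of h v \<theta> k] Cprob_reflect[of h v \<theta> k] by simp_all
qed

lemma Rprob_Suc_antipode:
  assumes "even v"
  shows "Rprob v \<theta> h (Suc k) = Cprob v \<theta> (h - 1) k"
proof -
  have "3 \<le> v" "1 \<le> h" "h \<le> v div 2" "h \<noteq> 1" using v h assms by auto
  then show ?thesis
    using Rprob_Suc[of v h \<theta> k] reflect_across_antipode[OF assms, of \<theta> k] by simp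
qed

lemma Cprob_Suc_antipode:
  assumes "even v"
  shows "Cprob v \<theta> h (Suc k) = Rprob v \<theta> (h - 1) k"
proof -
  have "3 \<le> v" "1 \<le> h" "h \<le> v div 2" "h \<noteq> 1" "2 * h = v" using v h assms by auto
  then have "Cprob v \<theta> h (Suc k) = \<theta> * Rprob v \<theta> (h - 1) k + (1 - \<theta>) * Rprob v \<theta> (h - 1) k"
    using Cprob_Suc[of v h \<theta> k] reflect_across_antipode[OF assms, of \<theta> k] by simp
  then show ?thesis by (simp add: algebra_simps)
qed

lemma Rprob_Suc_odd_max:
  assumes "odd v"
  shows "Rprob v \<theta> h (Suc k) = 1/2 * Cprob v \<theta> (h - 1) k + 1/2 * Cprob v \<theta> h k"
proof -
  have "3 \<le> v" "1 \<le> h" "h \<le> v div 2" "h \<noteq> 1" using v h assms by presburger+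
  then show ?thesis
    using Rprob_Suc[of v h \<theta> k] reflect_across_odd_max[OF assms, of \<theta> k] by simp
qed

lemma Cprob_Suc_odd_max:
  assumes "odd v"
  shows "Cprob v \<theta> h (Suc k) = (1 - \<theta>/2) * Rprob v \<theta> (h - 1) k + \<theta>/2 * Rprob v \<theta> h k"
proof -
  have "3 \<le> v" "1 \<le> h" "h \<le> v div 2" "h \<noteq> 1" "2 * h \<noteq> v" using v h assms by presburger+
  then show ?thesis
    using Cprob_Suc[of v h \<theta> k] reflect_across_odd_max[OF assms, of \<theta> k] by (simp add: field_simps)
qed

end

theorem mainTheorem6:
  fixes v i m :: nat and \<theta> :: real
  assumes "v \<ge> 4" and "0 \<le> \<theta>" and "\<theta> \<le> 1"
    and "1 \<le> i" and "i \<le> v div 2" and "m \<ge> 1"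
  shows
   "(even v \<longrightarrow>
      Rprob v \<theta> i m =
        (if i = 1 then 1/2 * Cprob v \<theta> 2 (m-1)
         else if i < v div 2 then 1/2 * Cprob v \<theta> (i-1) (m-1) + 1/2 * Cprob v \<theta> (i+1) (m-1)
         else Cprob v \<theta> (v div 2 - 1) (m-1)) \<and>
      Cprob v \<theta> i m =
        (if i = 1 then \<theta>/2 * Rprob v \<theta> 2 (m-1)
         else if i < v div 2 then (1 - \<theta>/2) * Rprob v \<theta> (i-1) (m-1) + \<theta>/2 * Rprob v \<theta> (i+1) (m-1)
         else Rprob v \<theta> (v div 2 - 1) (m-1))) \<and>
    (odd v \<longrightarrow>
      Rprob v \<theta> i m =
        (if i = 1 then 1/2 * Cprob v \<theta> 2 (m-1)
         else if i < (v-1) div 2 then 1/2 * Cprob v \<theta> (i-1) (m-1) + 1/2 * Cprob v \<theta> (i+1) (m-1)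
         else 1/2 * Cprob v \<theta> ((v-3) div 2) (m-1) + 1/2 * Cprob v \<theta> ((v-1) div 2) (m-1)) \<and>
      Cprob v \<theta> i m =
        (if i = 1 then \<theta>/2 * Rprob v \<theta> 2 (m-1)
         else if i < (v-1) div 2 then (1 - \<theta>/2) * Rprob v \<theta> (i-1) (m-1) + \<theta>/2 * Rprob v \<theta> (i+1) (m-1)
         else (1 - \<theta>/2) * Rprob v \<theta> ((v-3) div 2) (m-1) + \<theta>/2 * Rprob v \<theta> ((v-1) div 2) (m-1)))"
proof -
  \<comment> \<open>The recurrences are identities of the defining equations.\<close>
  obtain k where m: "m = Suc k" using \<open>m \<ge> 1\<close> by (cases m) auto
  have v3: "3 \<le> v" using \<open>v \<ge> 4\<close> by simp
  have half: "(v - 1) div 2 = (if odd v then v div 2 else v div 2 - 1)"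
    "(v - 3) div 2 = (if odd v then v div 2 - 1 else v div 2 - 2)"
    using \<open>v \<ge> 4\<close> by presburger+
  consider "i = 1" | "1 < i" "i < v div 2" | "i = v div 2" "i \<noteq> 1"
    using assms by linarith
  then show ?thesis
  proof cases
    case 1
    then show ?thesis
      unfolding half using Rprob_Suc_1[OF v3, of \<theta> k] Cprob_Suc_1[OF v3, of \<theta> k] by (simp add: m)
  next
    case 2
    then show ?thesis unfolding half by (simp add: m Rprob_Suc_interior Cprob_Suc_interior)
  next
    case 3
    then show ?thesis
      unfolding half using Rprob_Suc_antipode Cprob_Suc_antipode Rprob_Suc_odd_max Cprob_Suc_odd_max
        \<open>v \<ge> 4\<close> by (simp add: m)
  qed
qed

end
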